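(* There is no function $f : \mathbb{N} \to (0,+\infty)$ such that $\mathsf{LowerCalDist}(x,p) \ge f(T)\cdot \mathsf{CalDist}(x,p)$ holds for all positive integers $T$, all $x \in \{0,1\}^T$ and all $p \in [0,1]^T$.
   Context: For $x \in \{0,1\}^T$, let $\mathcal{C}(x) = \{q \in [0,1]^T : \sum_{t=1}^T (x_t - q_t)\mathbf{1}[q_t = \alpha] = 0 \text{ for all } \alpha \in [0,1]\}$ and $\mathsf{CalDist}(x,p) = \min_{q \in \mathcal{C}(x)} \|p-q\|_1$. Let $\underline{\mathcal{C}}(x)$ be the set of $T$-tuples $\mathcal{D} = (\mathcal{D}_1,\ldots,\mathcal{D}_T)$ of probability distributions, each with finite support contained in $[0,1]$, such that $\sum_{t=1}^T (x_t - \alpha)\mathcal{D}_t(\alpha) = 0$ for every $\alpha \in [0,1]$. Then $\mathsf{LowerCalDist}(x,p) = \inf_{\mathcal{D} \in \underline{\mathcal{C}}(x)} \sum_{t=1}^T \mathbb{E}_{q_t \sim \mathcal{D}_t}|p_t - q_t|$. *)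

theory Defs
  imports "HOL-Probability.Probability_Mass_Function"
begin

text \<open>Sequences of length T are represented as functions on nat, only the
values at indices t < T matter (index t stands for t+1 of the paper).\<close>

definition cal_set :: "nat \<Rightarrow> (nat \<Rightarrow> real) \<Rightarrow> (nat \<Rightarrow> real) set" where
  "cal_set T x = {q. (\<forall>t<T. q t \<in> {0..1}) \<and>
      (\<forall>\<alpha>::real. (\<Sum>t<T. (x t - q t) * (if q t = \<alpha> then 1 else 0)) = 0)}"

definition CalDist :: "nat \<Rightarrow> (nat \<Rightarrow> real) \<Rightarrow> (nat \<Rightarrow> real) \<Rightarrow> real" where
  "CalDist T x p = Inf ((\<lambda>q. \<Sum>t<T. \<bar>p t - q t\<bar>) ` cal_set T x)"

definition lower_cal_set :: "nat \<Rightarrow> (nat \<Rightarrow> real) \<Rightarrow> (nat \<Rightarrow> real pmf) set" where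
  "lower_cal_set T x = {D. (\<forall>t<T. finite (set_pmf (D t)) \<and> set_pmf (D t) \<subseteq> {0..1}) \<and>
      (\<forall>\<alpha>::real. (\<Sum>t<T. (x t - \<alpha>) * pmf (D t) \<alpha>) = 0)}"

definition LowerCalDist :: "nat \<Rightarrow> (nat \<Rightarrow> real) \<Rightarrow> (nat \<Rightarrow> real) \<Rightarrow> real" where
  "LowerCalDist T x p = Inf ((\<lambda>D. \<Sum>t<T. measure_pmf.expectation (D t) (\<lambda>q. \<bar>p t - q\<bar>))
      ` lower_cal_set T x)"

end

theory Submission imports Defs
begin

(* Take T = 4, outcomes x = (1,0,1,0) and forecasts p = (1/2+e, 1/2+e, 1/2-e, 1/2-e).
   A calibrated q is at distance at least e from p: the level q 0 is either at most 1/2,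
   or shared with round 2, or (being above 1/2 and balanced only by rounds with outcome 0)
   equal to 1. A lower calibrated forecast may instead randomize: moving p 1 down to 1/2-e
   and p 2 up to 1 with small probabilities of order e costs only O(e^2). Hence the ratio
   LowerCalDist / CalDist at T = 4 tends to 0 as e tends to 0. *)

definition two_point_pmf :: "real \<Rightarrow> real \<Rightarrow> real \<Rightarrow> real pmf" where
  "two_point_pmf u v w = map_pmf (\<lambda>b. if b then u else v) (bernoulli_pmf w)"

lemma set_pmf_two_point_pmf: "set_pmf (two_point_pmf u v w) \<subseteq> {u, v}"
  unfolding two_point_pmf_def by auto

lemma pmf_two_point_pmf:
  assumes "u \<noteq> v" "0 \<le> w" "w \<le> 1"
  shows "pmf (two_point_pmf u v w) y = (if y = u then w else 0) + (if y = v then 1 - w else 0)"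
proof -
  have "(\<lambda>b. if b then u else v) -` {y} =
      (if y = u then {True} else {}) \<union> (if y = v then {False} else {})"
    using assms(1) by (auto split: if_splits)
  moreover have "pmf (two_point_pmf u v w) y =
      (\<Sum>b\<in>(\<lambda>b. if b then u else v) -` {y}. pmf (bernoulli_pmf w) b)"
    unfolding two_point_pmf_def pmf_map by (rule measure_measure_pmf_finite) simp
  ultimately show ?thesis
    using assms by (auto simp: sum.union_disjoint)
qed

lemma expectation_two_point_pmf:
  assumes "0 \<le> w" "w \<le> 1"
  shows "measure_pmf.expectation (two_point_pmf u v w) g = w * g u + (1 - w) * g v"
  unfolding two_point_pmf_def using assms by simp

lemma mean_forecast_in_cal_set:
  assumes "\<forall>t<T. x t \<in> {0..1}"
  shows "(\<lambda>_. (\<Sum>t<T. x t) / T) \<in> cal_set T x"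
proof -
  have "0 \<le> (\<Sum>t<T. x t)" "(\<Sum>t<T. x t) \<le> T"
    using assms sum_mono[of "{..<T}" x "\<lambda>_. 1"] by (auto intro: sum_nonneg)
  then have "(\<Sum>t<T. x t) / T \<in> {0..1}"
    by (cases "T = 0") (auto simp: field_simps)
  moreover have "(\<Sum>t<T. x t - (\<Sum>t<T. x t) / T) = 0"
    by (cases "T = 0") (simp_all add: sum_subtractf)
  ultimately show ?thesis
    unfolding cal_set_def by simp
qed

lemma CalDist_greatest:
  assumes "\<forall>t<T. x t \<in> {0..1}"
    and "\<And>q. q \<in> cal_set T x \<Longrightarrow> c \<le> (\<Sum>t<T. \<bar>p t - q t\<bar>)"
  shows "c \<le> CalDist T x p"
  unfolding CalDist_def using mean_forecast_in_cal_set[OF assms(1)] assms(2)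
  by (intro cInf_greatest) auto

lemma LowerCalDist_le:
  assumes "D \<in> lower_cal_set T x"
  shows "LowerCalDist T x p \<le> (\<Sum>t<T. measure_pmf.expectation (D t) (\<lambda>q. \<bar>p t - q\<bar>))"
  unfolding LowerCalDist_def using assms
  by (intro cInf_lower bdd_belowI[of _ 0]) (auto intro!: sum_nonneg integral_nonneg_AE)

lemma sum_lessThan_4: "(\<Sum>t<4. g t) = g 0 + g 1 + g 2 + g 3" for g :: "nat \<Rightarrow> real"
  by (simp add: eval_nat_numeral)

definition example_outcomes :: "nat \<Rightarrow> real" where
  "example_outcomes t = (if t = 0 \<or> t = 2 then 1 else 0)"

definition example_forecasts :: "real \<Rightarrow> nat \<Rightarrow> real" where
  "example_forecasts e t = (if t < 2 then 1/2 + e else 1/2 - e)"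

lemma CalDist_example_ge:
  assumes "e \<le> 1/4"
  shows "e \<le> CalDist 4 example_outcomes (example_forecasts e)"
proof (rule CalDist_greatest)
  show "\<forall>t<4. example_outcomes t \<in> {0..1}"
    by (simp add: example_outcomes_def)
next
  fix q assume "q \<in> cal_set 4 example_outcomes"
  then have "(\<Sum>t<4. (example_outcomes t - q t) * (if q t = q 0 then 1 else 0)) = 0"
    unfolding cal_set_def by blast
  then have level: "(1 - q 0) + (if q 2 = q 0 then 1 - q 0 else 0) =
      (if q 1 = q 0 then q 0 else 0) + (if q 3 = q 0 then q 0 else 0)"
    by (auto simp: sum_lessThan_4 example_outcomes_def split: if_splits)
  have "e \<le> \<bar>1/2 + e - q 0\<bar> + \<bar>1/2 - e - q 2\<bar>"
  proof (cases "q 0 \<le> 1/2 \<or> q 2 = q 0")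
    case True
    then show ?thesis by auto
  next
    case False
    with level have "q 0 = 1"
      by (auto split: if_splits)
    with assms show ?thesis by simp
  qed
  also have "\<dots> \<le> \<bar>1/2 + e - q 0\<bar> + \<bar>1/2 + e - q 1\<bar> + \<bar>1/2 - e - q 2\<bar> + \<bar>1/2 - e - q 3\<bar>"
    by simp
  also have "\<dots> = (\<Sum>t<4. \<bar>example_forecasts e t - q t\<bar>)"
    unfolding sum_lessThan_4 example_forecasts_def by simp
  finally show "e \<le> (\<Sum>t<4. \<bar>example_forecasts e t - q t\<bar>)" .
qed

definition example_weight :: "real \<Rightarrow> real" where
  "example_weight e = (1/2 - e) / (1/2 + e)"

\<comment> \<open>The weight s balances the level 1/2 + e over rounds 0 and 1; the weight s (2 - s)
  then balances the level 1/2 - e over rounds 1, 2 and 3.\<close>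
definition example_lower_calibrated :: "real \<Rightarrow> nat \<Rightarrow> real pmf" where
  "example_lower_calibrated e t = (let s = example_weight e in
     if t = 0 then return_pmf (1/2 + e)
     else if t = 1 then two_point_pmf (1/2 + e) (1/2 - e) s
     else if t = 2 then two_point_pmf (1/2 - e) 1 (s * (2 - s))
     else return_pmf (1/2 - e))"

lemma example_weight_bounds:
  assumes "0 < e" "e < 1/2"
  shows "0 \<le> example_weight e" "example_weight e \<le> 1"
    "0 \<le> example_weight e * (2 - example_weight e)" "example_weight e * (2 - example_weight e) \<le> 1"
proof -
  show s0: "0 \<le> example_weight e" and s1: "example_weight e \<le> 1"
    using assms by (simp_all add: example_weight_def field_simps)
  then show "0 \<le> example_weight e * (2 - example_weight e)"
    by simp
  have "example_weight e * (2 - example_weight e) = 1 - (1 - example_weight e)\<^sup>2"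
    by (simp add: power2_eq_square algebra_simps)
  then show "example_weight e * (2 - example_weight e) \<le> 1"
    by simp
qed

lemma example_lower_calibrated_rounds:
  "example_lower_calibrated e 0 = return_pmf (1/2 + e)"
  "example_lower_calibrated e 1 = two_point_pmf (1/2 + e) (1/2 - e) (example_weight e)"
  "example_lower_calibrated e 2 =
     two_point_pmf (1/2 - e) 1 (example_weight e * (2 - example_weight e))"
  "example_lower_calibrated e 3 = return_pmf (1/2 - e)"
  by (simp_all add: example_lower_calibrated_def Let_def)

lemma set_pmf_example_lower_calibrated:
  "set_pmf (example_lower_calibrated e t) \<subseteq> {1/2 + e, 1/2 - e, 1}"
  unfolding example_lower_calibrated_def Let_def by (auto dest: subsetD[OF set_pmf_two_point_pmf])

lemma example_lower_calibrated_in_lower_cal_set: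
  assumes "0 < e" "e < 1/2"
  shows "example_lower_calibrated e \<in> lower_cal_set 4 example_outcomes"
proof -
  define s where "s = example_weight e"
  note s = example_weight_bounds[OF assms, folded s_def]
  have balance: "(1/2 + e) * s = 1/2 - e"
    using assms by (simp add: s_def example_weight_def)
  have range: "{1/2 + e, 1/2 - e, 1} \<subseteq> {0..1::real}"
    using assms by auto
  have "finite (set_pmf (example_lower_calibrated e t)) \<and>
      set_pmf (example_lower_calibrated e t) \<subseteq> {0..1}"
    for t
    using set_pmf_example_lower_calibrated[of e t] range by (auto intro: finite_subset)
  moreover have "(\<Sum>t<4. (example_outcomes t - \<alpha>) * pmf (example_lower_calibrated e t) \<alpha>) = 0"
    for \<alpha>
  proof -
    have distinct: "1/2 + e \<noteq> 1/2 - e" "1/2 - e \<noteq> 1"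
      using assms by auto
    have sum_eq: "(\<Sum>t<4. (example_outcomes t - \<alpha>) * pmf (example_lower_calibrated e t) \<alpha>) =
      (1 - \<alpha>) * indicator {\<alpha>} (1/2 + e)
      - \<alpha> * ((if \<alpha> = 1/2 + e then s else 0) + (if \<alpha> = 1/2 - e then 1 - s else 0))
      + (1 - \<alpha>) * ((if \<alpha> = 1/2 - e then s * (2 - s) else 0) + (if \<alpha> = 1 then 1 - s * (2 - s) else 0))
      - \<alpha> * indicator {\<alpha>} (1/2 - e)"
      using distinct s unfolding sum_lessThan_4 example_lower_calibrated_rounds s_def[symmetric]
      by (simp add: example_outcomes_def pmf_two_point_pmf)
    consider "\<alpha> = 1/2 + e" | "\<alpha> = 1/2 - e" | "\<alpha> \<noteq> 1/2 + e" "\<alpha> \<noteq> 1/2 - e"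
      by blast
    then show ?thesis
    proof cases
      case 1
      then show ?thesis
        using distinct balance unfolding sum_eq by simp
    next
      case 2
      have "(\<Sum>t<4. (example_outcomes t - \<alpha>) * pmf (example_lower_calibrated e t) \<alpha>) =
          (1/2 + e) * (s * (2 - s)) - (1/2 - e) * (1 - s) - (1/2 - e)"
        using 2 distinct unfolding sum_eq by simp
      also have "\<dots> = (1/2 - e) * (2 - s) - (1/2 - e) * (1 - s) - (1/2 - e)"
        using balance by (metis mult.assoc)
      also have "\<dots> = 0"
        by algebra
      finally show ?thesis .
    next
      case 3
      then show ?thesis
        unfolding sum_eq by simp
    qed
  qed
  ultimately show ?thesis
    unfolding lower_cal_set_def by blast
qed

lemma example_lower_calibrated_cost:
  assumes "0 < e" "e < 1/2"
  shows "(\<Sum>t<4. measure_pmf.expectation (example_lower_calibrated e t)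
      (\<lambda>q. \<bar>example_forecasts e t - q\<bar>)) = 8 * e\<^sup>2 / (1/2 + e)"
proof -
  define s where "s = example_weight e"
  note s = example_weight_bounds[OF assms, folded s_def]
  have "measure_pmf.expectation (example_lower_calibrated e 1) (\<lambda>q. \<bar>example_forecasts e 1 - q\<bar>) =
      (1 - s) * (2 * e)"
    using s assms unfolding example_lower_calibrated_rounds s_def[symmetric] example_forecasts_def
    by (simp add: expectation_two_point_pmf)
  moreover have "measure_pmf.expectation (example_lower_calibrated e 2) (\<lambda>q. \<bar>example_forecasts e 2 - q\<bar>) =
      (1 - s * (2 - s)) * (1/2 + e)"
    using s assms unfolding example_lower_calibrated_rounds s_def[symmetric] example_forecasts_def
    by (simp add: expectation_two_point_pmf)
  ultimately have cost: "(\<Sum>t<4. measure_pmf.expectation (example_lower_calibrated e t)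
      (\<lambda>q. \<bar>example_forecasts e t - q\<bar>)) = (1 - s) * (2 * e) + (1 - s)\<^sup>2 * (1/2 + e)"
    unfolding sum_lessThan_4 example_lower_calibrated_rounds s_def[symmetric] example_forecasts_def
    by (simp add: power2_eq_square algebra_simps)
  have one_minus_s: "1 - s = 2 * e / (1/2 + e)"
    using assms by (simp add: s_def example_weight_def field_simps)
  show ?thesis
    unfolding cost one_minus_s using assms by (simp add: power2_eq_square divide_simps)
qed

lemma LowerCalDist_example_le:
  assumes "0 < e" "e < 1/2"
  shows "LowerCalDist 4 example_outcomes (example_forecasts e) \<le> 16 * e\<^sup>2"
proof -
  have "LowerCalDist 4 example_outcomes (example_forecasts e) \<le> 8 * e\<^sup>2 / (1/2 + e)"
    using LowerCalDist_le[OF example_lower_calibrated_in_lower_cal_set[OF assms], of "example_forecasts e"]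
    unfolding example_lower_calibrated_cost[OF assms] .
  also have "\<dots> \<le> 16 * e\<^sup>2"
    using assms by (simp add: field_simps)
  finally show ?thesis .
qed

theorem proposition2:
  shows "\<not> (\<exists>f :: nat \<Rightarrow> real. (\<forall>n. f n > 0) \<and>
           (\<forall>T>0. \<forall>x p. (\<forall>t<T. x t \<in> {0, 1}) \<longrightarrow> (\<forall>t<T. p t \<in> {0..1}) \<longrightarrow>
              LowerCalDist T x p \<ge> f T * CalDist T x p))"
proof
  assume "\<exists>f :: nat \<Rightarrow> real. (\<forall>n. f n > 0) \<and>
           (\<forall>T>0. \<forall>x p. (\<forall>t<T. x t \<in> {0, 1}) \<longrightarrow> (\<forall>t<T. p t \<in> {0..1}) \<longrightarrow>
              LowerCalDist T x p \<ge> f T * CalDist T x p)"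
  then obtain f :: "nat \<Rightarrow> real" where f_pos: "f 4 > 0" and f_bound:
      "\<And>x p. \<forall>t<4. x t \<in> {0, 1} \<Longrightarrow> \<forall>t<4. p t \<in> {0..1} \<Longrightarrow>
        f 4 * CalDist 4 x p \<le> LowerCalDist 4 x p"
    by (metis zero_less_numeral)
  define e where "e = min (1/4) (f 4 / 32)"
  have e: "0 < e" "e \<le> 1/4" "16 * e \<le> f 4 / 2"
    using f_pos by (auto simp: e_def)
  have "f 4 * e \<le> f 4 * CalDist 4 example_outcomes (example_forecasts e)"
    using f_pos CalDist_example_ge[OF e(2)] by simp
  also have "\<dots> \<le> LowerCalDist 4 example_outcomes (example_forecasts e)"
    using e by (intro f_bound) (auto simp: example_outcomes_def example_forecasts_def)
  also have "\<dots> \<le> (16 * e) * e"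
    using LowerCalDist_example_le[of e] e by (simp add: power2_eq_square)
  also have "\<dots> \<le> (f 4 / 2) * e"
    using e by (intro mult_right_mono) auto
  finally show False
    using f_pos e by simp
qed

end
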